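(* Let $\delta=x^{\mathbf d}f(\theta)$ be a homogeneous differential operator of degree $\mathbf d$ with $\mathbf d\neq\mathbf 0$ and $-\mathbf d\in S$. Let $\mathcal B\subseteq\mathbb N^n$ be compatible with $\mathbf d$ and such that $\delta$ fixes the ideal $I_{\mathcal B}=(x^{\mathbf a}\mid\mathbf a\in V'_{\mathrm{mon}}(f)\cap W_{\mathcal B})$. Then for every $\mathcal B'\subseteq\mathbb N^n$ compatible with $\mathbf d$ with $W_{\mathcal B'}\subseteq W_{\mathcal B}$, the ideal $I_{\mathcal B'}=(x^{\mathbf a}\mid\mathbf a\in V'_{\mathrm{mon}}(f)\cap W_{\mathcal B'})$ is $\delta$-fixed.
   Context: Standing notation. Fix $d\ge 1$. Let $\sigma\subseteq\mathbb R^d$ be a full-dimensional, strongly convex rational polyhedral cone, so $\sigma^\vee$ is full-dimensional and strongly convex. $S=\sigma^\vee\cap\mathbb Z^d$, $R=\mathbb C[S]$ with monomial basis $x^{\mathbf a}$, $\mathbf a\in S$. $h_1,\dots,h_n$ are the primitive support functions of the facets of $\sigma^\vee$, so $S=\{\mathbf a\in\mathbb Z^d:h_i(\mathbf a)\ge0\ \forall i\}$. $(g,m)!=\prod_{j=0}^m(g-j)$ for $m\ge0$, $=1$ for $m<0$; $H_{\mathbf d}=\prod_i(h_i,h_i(-\mathbf d)-1)!$. For $f$ divisible by $H_{\mathbf d}$, $\delta=x^{\mathbf d}f(\theta)$ acts by $\delta(x^{\mathbf a})=f(\mathbf a)x^{\mathbf a+\mathbf d}$. $I$ is $\delta$-fixed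 if $\delta(I)=I$. $V_{\mathrm{mon}}(f)=\{\mathbf a\in\mathbb Z^d:f(\mathbf a)=0\}$. Write $\mathbf d=q\mathbf e$ with $q\in\mathbb Z_{\ge1}$, $\mathbf e$ primitive. For $\mathbf a\in\mathbb Z^d$, $\operatorname{val}(\mathbf a)=\inf\{t\in\mathbb R:\mathbf a+t\mathbf d\in V_{\mathrm{mon}}(f)\}\in\mathbb R\cup\{\pm\infty\}$ ($\inf\emptyset=+\infty$). When $\operatorname{val}(\mathbf a)$ is finite, $\operatorname{pval}(\mathbf a)=\max\{t\in[\operatorname{val}(\mathbf a),\operatorname{val}(\mathbf a)+1):\mathbf a+t\mathbf d\in V_{\mathrm{mon}}(f)\}$ and $\operatorname{vpt}(\mathbf a)=\mathbf a+\operatorname{pval}(\mathbf a)\mathbf d$. $V'_{\mathrm{mon}}(f)=\{\operatorname{vpt}(\mathbf a):\mathbf a\in\mathbb Z^d,\ \operatorname{val}(\mathbf a)\text{ finite}\}$. A tuple $\beta\in\mathbb N^n$ is compatible with $\mathbf d$ if for every $i$, $\beta_i=0$ or $h_i(\mathbf d)=0$; $\mathcal B\subseteq\mathbb N^n$ is compatible with $\mathbf d$ if each element is. $W_\beta=\{\mathbf a\in S: h_i(\mathbf a)\ge\beta_i\ \forall i\}$, $W_{\mathcal B}=\bigcup_{\beta\in\mathcal B}W_\beta$. *)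

theory Defs
  imports Complex_Main "HOL-Library.Poly_Mapping" "HOL-Library.Function_Algebras"
begin

text \<open>Lattice points of Z^d are functions 'n \<Rightarrow> int, with 'n a finite index type, d = CARD('n).
  A linear form with integer coefficients c :: 'n \<Rightarrow> int acts on integer / real points.\<close>

definition lin :: "('n::finite \<Rightarrow> int) \<Rightarrow> ('n \<Rightarrow> int) \<Rightarrow> int" where
  "lin c a = (\<Sum>k\<in>UNIV. c k * a k)"

definition linR :: "('n::finite \<Rightarrow> int) \<Rightarrow> ('n \<Rightarrow> real) \<Rightarrow> real" where
  "linR c x = (\<Sum>k\<in>UNIV. real_of_int (c k) * x k)"

text \<open>hs = [h_1,...,h_n] is the list of primitive support functions of the facets of
  sigma^vee, for sigma^vee full-dimensional and strongly convex:
  sigma^vee = {x. \<forall>i. h_i x \<ge> 0}; each h_i primitive; the system is irredundant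
  (so every h_i defines a facet); sigma^vee has nonempty interior; sigma^vee contains no line.\<close>

definition facet_data :: "('n::finite \<Rightarrow> int) list \<Rightarrow> bool" where
  "facet_data hs \<longleftrightarrow>
     distinct hs \<and>
     (\<forall>h\<in>set hs. Gcd (range h) = 1) \<and>
     (\<exists>x. \<forall>h\<in>set hs. linR h x > 0) \<and>
     (\<forall>x. (\<forall>h\<in>set hs. linR h x = 0) \<longrightarrow> x = 0) \<and>
     (\<forall>i<length hs. \<exists>x. linR (hs!i) x < 0 \<and> (\<forall>j<length hs. j \<noteq> i \<longrightarrow> linR (hs!j) x \<ge> 0))"

definition semigrp :: "('n::finite \<Rightarrow> int) list \<Rightarrow> ('n \<Rightarrow> int) set" where
  "semigrp hs = {a. \<forall>h\<in>set hs. lin h a \<ge> 0}"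

text \<open>Laurent polynomials C[Z^d] as finitely supported functions; R = C[S] is the
  subring of those supported in S.  Multiplication is convolution.\<close>

type_synonym 'n laurent = "('n \<Rightarrow> int) \<Rightarrow>\<^sub>0 complex"

definition xmon :: "('n \<Rightarrow> int) \<Rightarrow> 'n laurent" where
  "xmon a = Poly_Mapping.single a 1"

definition ringR :: "('n::finite \<Rightarrow> int) list \<Rightarrow> 'n laurent set" where
  "ringR hs = {p. Poly_Mapping.keys p \<subseteq> semigrp hs}"

definition mon_ideal :: "('n::finite \<Rightarrow> int) list \<Rightarrow> ('n \<Rightarrow> int) set \<Rightarrow> 'n laurent set" where
  "mon_ideal hs E = {p. \<exists>F r. finite F \<and> F \<subseteq> E \<and> (\<forall>a\<in>F. r a \<in> ringR hs) \<and>
                          p = (\<Sum>a\<in>F. r a * xmon a)}"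

text \<open>Polynomials in theta_1..theta_d (multivariate polynomials over C) as finitely supported
  maps from exponent vectors to coefficients; evaluation at an integer point.\<close>

type_synonym 'n mpoly = "('n \<Rightarrow>\<^sub>0 nat) \<Rightarrow>\<^sub>0 complex"

definition peval :: "'n::finite mpoly \<Rightarrow> ('n \<Rightarrow> int) \<Rightarrow> complex" where
  "peval f a = (\<Sum>m\<in>Poly_Mapping.keys f. Poly_Mapping.lookup f m * (\<Prod>k\<in>UNIV. (of_int (a k)) ^ Poly_Mapping.lookup m k))"

definition pconst :: "complex \<Rightarrow> 'n mpoly" where
  "pconst c = Poly_Mapping.single 0 c"

definition pvar :: "'n \<Rightarrow> 'n mpoly" where
  "pvar k = Poly_Mapping.single (Poly_Mapping.single k 1) 1"

definition plin :: "('n::finite \<Rightarrow> int) \<Rightarrow> 'n mpoly" where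
  "plin c = (\<Sum>k\<in>UNIV. pconst (of_int (c k)) * pvar k)"

definition fallfac :: "'n mpoly \<Rightarrow> int \<Rightarrow> 'n mpoly" where
  "fallfac g m = (if m < 0 then 1 else (\<Prod>j\<in>{0..nat m}. g - pconst (of_nat j)))"

definition Hpoly :: "('n::finite \<Rightarrow> int) list \<Rightarrow> ('n \<Rightarrow> int) \<Rightarrow> 'n mpoly" where
  "Hpoly hs d = (\<Prod>i<length hs. fallfac (plin (hs!i)) (lin (hs!i) (- d) - 1))"

text \<open>delta = x^d f(theta), acting by x^a \<mapsto> f(a) x^(a+d), extended linearly.\<close>

definition delta :: "('n::finite \<Rightarrow> int) \<Rightarrow> 'n mpoly \<Rightarrow> 'n laurent \<Rightarrow> 'n laurent" where
  "delta d f p = (\<Sum>a\<in>Poly_Mapping.keys p. Poly_Mapping.single (a + d) (Poly_Mapping.lookup p a * peval f a))"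

definition delta_fixed :: "('n::finite \<Rightarrow> int) \<Rightarrow> 'n mpoly \<Rightarrow> 'n laurent set \<Rightarrow> bool" where
  "delta_fixed d f I \<longleftrightarrow> delta d f ` I = I"

definition Vmon :: "'n::finite mpoly \<Rightarrow> ('n \<Rightarrow> int) set" where
  "Vmon f = {a. peval f a = 0}"

definition Tset :: "('n::finite \<Rightarrow> int) \<Rightarrow> 'n mpoly \<Rightarrow> ('n \<Rightarrow> int) \<Rightarrow> real set" where
  "Tset d f a = {t. \<exists>b\<in>Vmon f. (\<lambda>k. real_of_int (b k)) = (\<lambda>k. real_of_int (a k) + t * real_of_int (d k))}"

definition val_finite :: "('n::finite \<Rightarrow> int) \<Rightarrow> 'n mpoly \<Rightarrow> ('n \<Rightarrow> int) \<Rightarrow> bool" where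
  "val_finite d f a \<longleftrightarrow> Tset d f a \<noteq> {} \<and> bdd_below (Tset d f a)"

definition val :: "('n::finite \<Rightarrow> int) \<Rightarrow> 'n mpoly \<Rightarrow> ('n \<Rightarrow> int) \<Rightarrow> real" where
  "val d f a = Inf (Tset d f a)"

definition pval :: "('n::finite \<Rightarrow> int) \<Rightarrow> 'n mpoly \<Rightarrow> ('n \<Rightarrow> int) \<Rightarrow> real" where
  "pval d f a = Max {t\<in>Tset d f a. val d f a \<le> t \<and> t < val d f a + 1}"

definition Vmon' :: "('n::finite \<Rightarrow> int) \<Rightarrow> 'n mpoly \<Rightarrow> ('n \<Rightarrow> int) set" where
  "Vmon' d f = {b. \<exists>a. val_finite d f a \<and>
      (\<lambda>k. real_of_int (b k)) = (\<lambda>k. real_of_int (a k) + pval d f a * real_of_int (d k))}"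

text \<open>Tuples beta \<in> N^n are lists of length n = length hs.\<close>

definition compatible :: "('n::finite \<Rightarrow> int) list \<Rightarrow> ('n \<Rightarrow> int) \<Rightarrow> nat list \<Rightarrow> bool" where
  "compatible hs d \<beta> \<longleftrightarrow> length \<beta> = length hs \<and>
      (\<forall>i<length hs. \<beta>!i = 0 \<or> lin (hs!i) d = 0)"

definition Wset :: "('n::finite \<Rightarrow> int) list \<Rightarrow> nat list \<Rightarrow> ('n \<Rightarrow> int) set" where
  "Wset hs \<beta> = {a\<in>semigrp hs. \<forall>i<length hs. lin (hs!i) a \<ge> int (\<beta>!i)}"

definition WsetB :: "('n::finite \<Rightarrow> int) list \<Rightarrow> nat list set \<Rightarrow> ('n \<Rightarrow> int) set" where
  "WsetB hs B = (\<Union>\<beta>\<in>B. Wset hs \<beta>)"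

definition IB :: "('n::finite \<Rightarrow> int) list \<Rightarrow> ('n \<Rightarrow> int) \<Rightarrow> 'n mpoly \<Rightarrow> nat list set \<Rightarrow> 'n laurent set" where
  "IB hs d f B = mon_ideal hs (Vmon' d f \<inter> WsetB hs B)"

end

theory Submission
  imports Defs
begin

text \<open>The monomials of a monomial ideal of R have exponents in an S-order ideal E, and \<delta> fixes
  the ideal exactly when E is closed under adding d at non-zeros of f and f has no zero on E - d.
  Starting from u \<in> E and walking along u, u + d, u + 2d, ... one stays in E until hitting a zero
  of f, which must happen because some facet function decreases along d. The valuation point of
  that zero lies again in E, in V'_mon(f), and further along the ray through u. A tuple \<beta>
  compatible with d only constrains facets parallel to d, so this point lies in W_\<beta> whenever u
  does. Hence the exponents of I_B' are exactly E \<inter> W_B', which inherits both closure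
  properties.\<close>

lemma lin_add: "lin h (a + b) = lin h a + lin h b"
  unfolding lin_def by (simp add: sum.distrib distrib_left)

lemma lin_diff: "lin h (a - b) = lin h a - lin h b"
  unfolding lin_def by (simp add: sum_subtractf right_diff_distrib)

lemma lin_uminus: "lin h (- a) = - lin h a"
  unfolding lin_def by (simp add: sum_negf)

lemma lin_line:
  assumes "(\<lambda>k. real_of_int (b k)) = (\<lambda>k. real_of_int (a k) + t * real_of_int (d k))"
  shows "real_of_int (lin h b) = real_of_int (lin h a) + t * real_of_int (lin h d)"
proof -
  have "real_of_int (lin h b) = (\<Sum>k\<in>UNIV. real_of_int (h k) * (real_of_int (a k) + t * real_of_int (d k)))"
    unfolding lin_def using fun_cong[OF assms] by simp
  also have "\<dots> = (\<Sum>k\<in>UNIV. real_of_int (h k) * real_of_int (a k))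
                  + t * (\<Sum>k\<in>UNIV. real_of_int (h k) * real_of_int (d k))"
    by (simp add: distrib_left sum.distrib sum_distrib_left algebra_simps)
  finally show ?thesis unfolding lin_def by simp
qed

lemma line_lin_eq:
  assumes "(\<lambda>k. real_of_int (b k)) = (\<lambda>k. real_of_int (a k) + t * real_of_int (d k))"
    and "lin h d = 0"
  shows "lin h b = lin h a"
  using lin_line[OF assms(1), of h] assms(2) by simp

lemma semigrp_add: "a \<in> semigrp hs \<Longrightarrow> b \<in> semigrp hs \<Longrightarrow> a + b \<in> semigrp hs"
  unfolding semigrp_def by (auto simp: lin_add)

lemma line_diff_in_semigrp:
  assumes "(\<lambda>k. real_of_int (b k)) = (\<lambda>k. real_of_int (a k) + t * real_of_int (d k))"
    and "t \<le> 0" and "- d \<in> semigrp hs"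
  shows "b - a \<in> semigrp hs"
  unfolding semigrp_def
proof (intro CollectI ballI)
  fix h assume h: "h \<in> set hs"
  have "real_of_int (lin h d) \<le> 0"
    using assms(3) h unfolding semigrp_def by (auto simp: lin_uminus)
  with assms(2) have "t * real_of_int (lin h d) \<ge> 0" by (simp add: mult_nonpos_nonpos)
  with lin_line[OF assms(1), of h] show "0 \<le> lin h (b - a)" by (simp add: lin_diff)
qed

lemma exists_facet_lin_neg:
  assumes "facet_data hs" "d \<noteq> 0" "- d \<in> semigrp hs"
  obtains h where "h \<in> set hs" "lin h d < 0"
proof -
  have "\<exists>h\<in>set hs. lin h d < 0"
  proof (rule ccontr)
    assume "\<not> ?thesis"
    hence "\<forall>h\<in>set hs. lin h d = 0"
      using assms(3) unfolding semigrp_def by (force simp: lin_uminus)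
    moreover have "linR h (\<lambda>k. real_of_int (d k)) = real_of_int (lin h d)" for h
      unfolding linR_def lin_def by simp
    ultimately have "\<forall>h\<in>set hs. linR h (\<lambda>k. real_of_int (d k)) = 0" by simp
    hence "(\<lambda>k. real_of_int (d k)) = 0" using assms(1) unfolding facet_data_def by blast
    with assms(2) show False by (simp add: fun_eq_iff)
  qed
  with that show ?thesis by blast
qed

subsection \<open>Exponent sets of monomial ideals\<close>

definition mon_ideal_exps :: "('n::finite \<Rightarrow> int) list \<Rightarrow> ('n \<Rightarrow> int) set \<Rightarrow> ('n \<Rightarrow> int) set" where
  "mon_ideal_exps hs G = {g + s | g s. g \<in> G \<and> s \<in> semigrp hs}"

lemma mon_ideal_exps_subset_semigrp: "G \<subseteq> semigrp hs \<Longrightarrow> mon_ideal_exps hs G \<subseteq> semigrp hs"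
  unfolding mon_ideal_exps_def using semigrp_add by blast

lemma mon_ideal_exps_add:
  assumes "x \<in> mon_ideal_exps hs G" "s \<in> semigrp hs"
  shows "x + s \<in> mon_ideal_exps hs G"
proof -
  obtain g s' where "x = g + s'" "g \<in> G" "s' \<in> semigrp hs"
    using assms(1) unfolding mon_ideal_exps_def by blast
  with semigrp_add[OF \<open>s' \<in> _\<close> assms(2)] show ?thesis
    unfolding mon_ideal_exps_def by (auto simp: add.assoc)
qed

lemma subset_mon_ideal_exps: "G \<subseteq> mon_ideal_exps hs G"
proof
  fix g assume "g \<in> G"
  moreover have "0 \<in> semigrp hs" by (simp add: semigrp_def lin_def)
  ultimately have "g + 0 \<in> mon_ideal_exps hs G" unfolding mon_ideal_exps_def by blast
  thus "g \<in> mon_ideal_exps hs G" by simp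
qed

lemma mon_ideal_exps_least:
  assumes "G \<subseteq> E" "\<And>x s. x \<in> E \<Longrightarrow> s \<in> semigrp hs \<Longrightarrow> x + s \<in> E"
  shows "mon_ideal_exps hs G \<subseteq> E"
  using assms unfolding mon_ideal_exps_def by blast

lemma keys_mon_ideal:
  assumes "p \<in> mon_ideal hs G"
  shows "Poly_Mapping.keys p \<subseteq> mon_ideal_exps hs G"
proof -
  obtain F r where F: "finite F" "F \<subseteq> G" "\<forall>a\<in>F. r a \<in> ringR hs"
    and p: "p = (\<Sum>a\<in>F. r a * xmon a)"
    using assms unfolding mon_ideal_def by blast
  have "Poly_Mapping.keys (r a * xmon a) \<subseteq> mon_ideal_exps hs G" if "a \<in> F" for a
  proof
    fix x assume "x \<in> Poly_Mapping.keys (r a * xmon a)"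
    then obtain y z where "x = y + z" "y \<in> Poly_Mapping.keys (r a)" "z \<in> Poly_Mapping.keys (xmon a)"
      using keys_mult by blast
    moreover have "z = a" using \<open>z \<in> _\<close> by (simp add: xmon_def split: if_splits)
    moreover have "y \<in> semigrp hs" using F(3) that \<open>y \<in> _\<close> unfolding ringR_def by auto
    ultimately show "x \<in> mon_ideal_exps hs G" unfolding mon_ideal_exps_def using F(2) that
      by (auto simp: add.commute)
  qed
  thus ?thesis using p keys_sum[of "\<lambda>a. r a * xmon a" F] by blast
qed

lemma sum_single_lookup_keys:
  "(\<Sum>k\<in>Poly_Mapping.keys p. Poly_Mapping.single k (Poly_Mapping.lookup p k)) = p"
proof (rule poly_mapping_eqI)
  fix j
  have "Poly_Mapping.lookup (\<Sum>k\<in>Poly_Mapping.keys p. Poly_Mapping.single k (Poly_Mapping.lookup p k)) j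
      = (\<Sum>k\<in>Poly_Mapping.keys p. if k = j then Poly_Mapping.lookup p k else 0)"
    by (simp add: lookup_sum lookup_single when_def)
  also have "\<dots> = Poly_Mapping.lookup p j" by (simp add: sum.delta' in_keys_iff)
  finally show "Poly_Mapping.lookup
      (\<Sum>k\<in>Poly_Mapping.keys p. Poly_Mapping.single k (Poly_Mapping.lookup p k)) j
      = Poly_Mapping.lookup p j" .
qed

lemma mon_idealI:
  assumes "Poly_Mapping.keys p \<subseteq> mon_ideal_exps hs G"
  shows "p \<in> mon_ideal hs G"
proof -
  define K where "K = Poly_Mapping.keys p"
  have "\<forall>k\<in>K. \<exists>g. g \<in> G \<and> k - g \<in> semigrp hs"
  proof
    fix k assume "k \<in> K"
    then obtain g s where "k = g + s" "g \<in> G" "s \<in> semigrp hs"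
      using assms unfolding K_def mon_ideal_exps_def by blast
    thus "\<exists>g. g \<in> G \<and> k - g \<in> semigrp hs" by (intro exI[of _ g]) simp
  qed
  then obtain g where "\<forall>k\<in>K. g k \<in> G \<and> k - g k \<in> semigrp hs"
    by (rule bchoice[THEN exE]) blast
  hence g: "\<And>k. k \<in> K \<Longrightarrow> g k \<in> G \<and> k - g k \<in> semigrp hs" by blast
  \<comment> \<open>each monomial of p is attributed to one generator g k dividing it\<close>
  define r where
    "r a = (\<Sum>k\<in>{k\<in>K. g k = a}. Poly_Mapping.single (k - a) (Poly_Mapping.lookup p k))" for a
  have r_ringR: "r a \<in> ringR hs" for a
  proof -
    have "Poly_Mapping.keys (r a) \<subseteq>
        (\<Union>k\<in>{k\<in>K. g k = a}. Poly_Mapping.keys (Poly_Mapping.single (k - a) (Poly_Mapping.lookup p k)))"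
      unfolding r_def by (rule keys_sum)
    also have "\<dots> \<subseteq> semigrp hs" using g by auto
    finally show ?thesis unfolding ringR_def by simp
  qed
  have "(\<Sum>a\<in>g ` K. r a * xmon a)
      = (\<Sum>a\<in>g ` K. \<Sum>k\<in>{k\<in>K. g k = a}. Poly_Mapping.single k (Poly_Mapping.lookup p k))"
    unfolding r_def xmon_def by (simp add: sum_distrib_right mult_single)
  also have "\<dots> = (\<Sum>k\<in>K. Poly_Mapping.single k (Poly_Mapping.lookup p k))"
    by (rule sum.group) (simp_all add: K_def)
  also have "\<dots> = p" unfolding K_def by (rule sum_single_lookup_keys)
  finally have "p = (\<Sum>a\<in>g ` K. r a * xmon a)" by simp
  moreover have "finite (g ` K)" unfolding K_def by simp
  moreover have "g ` K \<subseteq> G" using g by blast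
  ultimately show ?thesis unfolding mon_ideal_def using r_ringR
    by (intro CollectI exI[of _ "g ` K"] exI[of _ r]) simp
qed

lemma mon_ideal_eq: "mon_ideal hs G = {p. Poly_Mapping.keys p \<subseteq> mon_ideal_exps hs G}"
  using keys_mon_ideal mon_idealI by blast

subsection \<open>\<delta>-fixed spaces of Laurent polynomials with prescribed support\<close>

lemma lookup_delta:
  "Poly_Mapping.lookup (delta d f p) b = Poly_Mapping.lookup p (b - d) * peval f (b - d)"
proof -
  have "Poly_Mapping.lookup (delta d f p) b =
     (\<Sum>a\<in>Poly_Mapping.keys p. if a = b - d then Poly_Mapping.lookup p a * peval f a else 0)"
    unfolding delta_def lookup_sum lookup_single when_def
    by (rule sum.cong) (auto simp: eq_diff_eq)
  also have "\<dots> = Poly_Mapping.lookup p (b - d) * peval f (b - d)"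
    by (simp add: sum.delta' in_keys_iff)
  finally show ?thesis .
qed

lemma keys_delta: "b \<in> Poly_Mapping.keys (delta d f p) \<longleftrightarrow>
   b - d \<in> Poly_Mapping.keys p \<and> peval f (b - d) \<noteq> 0"
  by (simp add: in_keys_iff lookup_delta)

lemma keys_xmon [simp]: "Poly_Mapping.keys (xmon e) = {e}"
  by (simp add: xmon_def)

lemma delta_fixed_supported_add:
  assumes "delta_fixed d f {p. Poly_Mapping.keys p \<subseteq> E}" "e \<in> E" "peval f e \<noteq> 0"
  shows "e + d \<in> E"
proof -
  have "xmon e \<in> {p. Poly_Mapping.keys p \<subseteq> E}" using assms(2) by simp
  hence "delta d f (xmon e) \<in> {p. Poly_Mapping.keys p \<subseteq> E}"
    using assms(1) unfolding delta_fixed_def by blast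
  moreover have "e + d \<in> Poly_Mapping.keys (delta d f (xmon e))"
    using assms(3) by (simp add: keys_delta)
  ultimately show ?thesis by blast
qed

lemma delta_fixed_supported_nonzero:
  assumes "delta_fixed d f {p. Poly_Mapping.keys p \<subseteq> E}" "e \<in> E"
  shows "peval f (e - d) \<noteq> 0"
proof -
  have "xmon e \<in> delta d f ` {p. Poly_Mapping.keys p \<subseteq> E}"
    using assms unfolding delta_fixed_def by auto
  then obtain p where "delta d f p = xmon e" by (elim imageE) simp
  hence "e \<in> Poly_Mapping.keys (delta d f p)" by simp
  thus ?thesis by (simp add: keys_delta)
qed

lemma delta_fixed_supportedI:
  assumes add: "\<And>e. e \<in> E \<Longrightarrow> peval f e \<noteq> 0 \<Longrightarrow> e + d \<in> E"
    and nonzero: "\<And>e. e \<in> E \<Longrightarrow> peval f (e - d) \<noteq> 0"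
    and diff: "\<And>e. e \<in> E \<Longrightarrow> e - d \<in> E"
  shows "delta_fixed d f {p. Poly_Mapping.keys p \<subseteq> E}"
  unfolding delta_fixed_def
proof (intro equalityI subsetI)
  fix q assume "q \<in> delta d f ` {p. Poly_Mapping.keys p \<subseteq> E}"
  then obtain p where "Poly_Mapping.keys p \<subseteq> E" "q = delta d f p" by blast
  with add show "q \<in> {p. Poly_Mapping.keys p \<subseteq> E}"
    by (force simp: keys_delta)
next
  fix q :: "'a::finite laurent" assume q: "q \<in> {p. Poly_Mapping.keys p \<subseteq> E}"
  define g where "g a = Poly_Mapping.lookup q (a + d) / peval f a" for a
  have g_support: "{a. g a \<noteq> 0} \<subseteq> (\<lambda>b. b - d) ` Poly_Mapping.keys q"
    by (force simp: g_def in_keys_iff)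
  hence "finite {a. g a \<noteq> 0}" by (rule finite_subset) simp
  define p where "p = Abs_poly_mapping g"
  have lp: "Poly_Mapping.lookup p = g" unfolding p_def using \<open>finite _\<close> by simp
  have "Poly_Mapping.keys p \<subseteq> E"
  proof
    fix a assume "a \<in> Poly_Mapping.keys p"
    hence "g a \<noteq> 0" by (simp add: in_keys_iff lp)
    then obtain b where "b \<in> Poly_Mapping.keys q" "a = b - d" using g_support by blast
    thus "a \<in> E" using q diff by auto
  qed
  moreover have "delta d f p = q"
  proof (rule poly_mapping_eqI)
    fix b
    show "Poly_Mapping.lookup (delta d f p) b = Poly_Mapping.lookup q b"
    proof (cases "b \<in> Poly_Mapping.keys q")
      case True
      hence "peval f (b - d) \<noteq> 0" using nonzero q by auto
      thus ?thesis by (simp add: lookup_delta lp g_def)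
    next
      case False
      thus ?thesis by (simp add: lookup_delta lp g_def in_keys_iff)
    qed
  qed
  ultimately show "q \<in> delta d f ` {p. Poly_Mapping.keys p \<subseteq> E}" by blast
qed

subsection \<open>Valuation points along a ray\<close>

lemma first_zero_on_ray:
  assumes add: "\<And>e. e \<in> E \<Longrightarrow> peval f e \<noteq> 0 \<Longrightarrow> e + d \<in> E"
    and E_semigrp: "E \<subseteq> semigrp hs"
    and h: "h \<in> set hs" "lin h d < 0"
    and u: "u \<in> E"
  obtains w k where "w \<in> E" "w \<in> Vmon f"
    "(\<lambda>i. real_of_int (w i)) = (\<lambda>i. real_of_int (u i) + real k * real_of_int (d i))"
proof -
  define pt where "pt k = (\<lambda>i. u i + int k * d i)" for k :: nat
  have pt_Suc: "pt (Suc k) = pt k + d" for k unfolding pt_def by (auto simp: algebra_simps)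
  have pt_in_E: "pt k \<in> E" if "\<forall>j<k. peval f (pt j) \<noteq> 0" for k
    using that
  proof (induction k)
    case 0 then show ?case using u by (simp add: pt_def)
  next
    case (Suc k)
    hence "pt k \<in> E" "peval f (pt k) \<noteq> 0" by auto
    thus ?case unfolding pt_Suc by (rule add)
  qed
  have "\<exists>k. peval f (pt k) = 0"
  proof (rule ccontr)
    assume no_zero: "\<not> ?thesis"
    define k where "k = nat (lin h u + 1)"
    have "lin h u \<ge> 0" using u E_semigrp h(1) unfolding semigrp_def by auto
    hence "int k = lin h u + 1" unfolding k_def by simp
    moreover have "lin h (pt k) = lin h u + int k * lin h d"
      unfolding lin_def pt_def by (simp add: sum.distrib sum_distrib_left algebra_simps)
    moreover have "lin h (pt k) \<ge> 0"
      using pt_in_E[of k] no_zero E_semigrp h(1) unfolding semigrp_def by auto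
    ultimately have "(lin h u + 1) * lin h d \<ge> - lin h u" by simp
    moreover have "(lin h u + 1) * lin h d \<le> (lin h u + 1) * (-1)"
      using h(2) \<open>lin h u \<ge> 0\<close> by (intro mult_left_mono) auto
    ultimately show False by simp
  qed
  then obtain k where "peval f (pt k) = 0" "\<forall>j<k. peval f (pt j) \<noteq> 0"
    using exists_least_iff[of "\<lambda>k. peval f (pt k) = 0"] by blast
  with pt_in_E show ?thesis by (intro that[of "pt k" k]) (auto simp: Vmon_def pt_def)
qed

lemma finite_Tset_Icc:
  assumes "d \<noteq> 0"
  shows "finite (Tset d f w \<inter> {l..r})"
proof -
  obtain i where i: "d i \<noteq> 0" using assms by (auto simp: fun_eq_iff)
  define N where "N = \<lceil>max \<bar>l\<bar> \<bar>r\<bar> * \<bar>real_of_int (d i)\<bar>\<rceil>"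
  \<comment> \<open>t is determined by the integer i-th coordinate of w + t d\<close>
  have "Tset d f w \<inter> {l..r} \<subseteq> (\<lambda>n. real_of_int n / real_of_int (d i)) ` {-N..N}"
  proof
    fix t assume t: "t \<in> Tset d f w \<inter> {l..r}"
    then obtain b where "(\<lambda>k. real_of_int (b k)) = (\<lambda>k. real_of_int (w k) + t * real_of_int (d k))"
      unfolding Tset_def by blast
    from fun_cong[OF this, of i] have nt: "real_of_int (b i - w i) = t * real_of_int (d i)" by simp
    have "\<bar>t\<bar> \<le> max \<bar>l\<bar> \<bar>r\<bar>" using t by auto
    hence "\<bar>real_of_int (b i - w i)\<bar> \<le> max \<bar>l\<bar> \<bar>r\<bar> * \<bar>real_of_int (d i)\<bar>"
      unfolding nt abs_mult by (simp add: mult_right_mono)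
    hence "b i - w i \<in> {-N..N}" unfolding N_def by (simp add: abs_le_iff) linarith
    moreover have "t = real_of_int (b i - w i) / real_of_int (d i)" using nt i by simp
    ultimately show "t \<in> (\<lambda>n. real_of_int n / real_of_int (d i)) ` {-N..N}" by blast
  qed
  thus ?thesis by (rule finite_subset) simp
qed

lemma pval_of_Vmon:
  assumes "d \<noteq> 0" "w \<in> Vmon f" and T_gt: "\<And>t. t \<in> Tset d f w \<Longrightarrow> -1 < t"
  shows "val_finite d f w" "pval d f w \<in> Tset d f w" "0 \<le> pval d f w" "pval d f w < 1"
    "pval d f w - 1 \<notin> Tset d f w"
proof -
  define T where "T = Tset d f w"
  have T0: "0 \<in> T" unfolding T_def Tset_def using assms(2) by auto
  have fin: "finite (T \<inter> {-1..r})" for r unfolding T_def by (rule finite_Tset_Icc[OF assms(1)])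
  define m where "m = Min (T \<inter> {-1..0})"
  have m: "m \<in> T" "-1 < m" "m \<le> 0"
    using Min_in[OF fin, of 0] T0 T_gt unfolding m_def T_def by fastforce+
  have m_le: "m \<le> t" if "t \<in> T" for t
    using Min_le[OF fin, of t 0] that T_gt m(3) unfolding m_def T_def by fastforce
  have val: "val d f w = m" unfolding val_def T_def[symmetric]
    using m m_le by (intro cInf_eq_minimum)
  have "bdd_below T"
    using T_gt unfolding T_def by (intro bdd_belowI[of _ "-1"]) (simp add: less_imp_le)
  with T0 show "val_finite d f w" unfolding val_finite_def T_def by auto
  define P where "P = {t\<in>T. m \<le> t \<and> t < m + 1}"
  have "P \<subseteq> T \<inter> {-1..1}" using m unfolding P_def by auto
  hence fin_P: "finite P" using fin by (rule finite_subset)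
  have P0: "0 \<in> P" using T0 m unfolding P_def by auto
  have pval: "pval d f w = Max P" unfolding pval_def P_def val T_def ..
  have "Max P \<in> P" using fin_P P0 by (intro Max_in) auto
  hence max_T: "Max P \<in> T" and max_lt: "Max P < m + 1" unfolding P_def by auto
  show "pval d f w \<in> Tset d f w" using max_T unfolding pval T_def .
  show "0 \<le> pval d f w" unfolding pval using fin_P P0 by (rule Max_ge)
  show "pval d f w < 1" unfolding pval using max_lt m(3) by simp
  show "pval d f w - 1 \<notin> Tset d f w"
    using m_le[of "Max P - 1"] max_lt unfolding pval T_def by auto
qed

lemma Tset_gt_minus_one:
  assumes nonzero: "\<And>e. e \<in> E \<Longrightarrow> peval f (e - d) \<noteq> 0"
    and E_add: "\<And>x s. x \<in> E \<Longrightarrow> s \<in> semigrp hs \<Longrightarrow> x + s \<in> E"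
    and "- d \<in> semigrp hs" "w \<in> E" "t \<in> Tset d f w"
  shows "-1 < t"
proof (rule ccontr)
  assume "\<not> -1 < t"
  obtain b where b: "b \<in> Vmon f"
    "(\<lambda>k. real_of_int (b k)) = (\<lambda>k. real_of_int (w k) + t * real_of_int (d k))"
    using assms(5) unfolding Tset_def by blast
  have "(\<lambda>k. real_of_int ((b + d) k)) = (\<lambda>k. real_of_int (w k) + (t + 1) * real_of_int (d k))"
    using fun_cong[OF b(2)] by (auto simp: algebra_simps)
  with \<open>\<not> -1 < t\<close> assms(3) have "b + d - w \<in> semigrp hs"
    by (intro line_diff_in_semigrp) auto
  hence "w + (b + d - w) \<in> E" using E_add assms(4) by blast
  hence "b + d \<in> E" by simp
  with nonzero[of "b + d"] b(1) show False by (simp add: Vmon_def)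
qed

lemma exists_Vmon'_on_ray:
  assumes add: "\<And>e. e \<in> E \<Longrightarrow> peval f e \<noteq> 0 \<Longrightarrow> e + d \<in> E"
    and nonzero: "\<And>e. e \<in> E \<Longrightarrow> peval f (e - d) \<noteq> 0"
    and E_semigrp: "E \<subseteq> semigrp hs"
    and E_add: "\<And>x s. x \<in> E \<Longrightarrow> s \<in> semigrp hs \<Longrightarrow> x + s \<in> E"
    and neg_d: "- d \<in> semigrp hs" and "d \<noteq> 0"
    and h: "h \<in> set hs" "lin h d < 0"
    and u: "u \<in> E"
  obtains b t where "b \<in> Vmon' d f" "b \<in> E" "0 \<le> t"
    "(\<lambda>k. real_of_int (b k)) = (\<lambda>k. real_of_int (u k) + t * real_of_int (d k))"
proof -
  obtain w n where w: "w \<in> E" "w \<in> Vmon f"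
    and wu: "(\<lambda>i. real_of_int (w i)) = (\<lambda>i. real_of_int (u i) + real n * real_of_int (d i))"
    using first_zero_on_ray[OF add E_semigrp h u] .
  note pv = pval_of_Vmon[OF \<open>d \<noteq> 0\<close> w(2) Tset_gt_minus_one[OF nonzero E_add neg_d w(1)]]
  define pv where "pv = pval d f w"
  obtain b where "b \<in> Vmon f"
    and bw: "(\<lambda>k. real_of_int (b k)) = (\<lambda>k. real_of_int (w k) + pv * real_of_int (d k))"
    using pv(2) unfolding pv_def Tset_def by blast
  have b_Vmon': "b \<in> Vmon' d f" using pv(1) bw unfolding Vmon'_def pv_def by blast
  have line_b_d: "(\<lambda>k. real_of_int ((b - d) k)) = (\<lambda>k. real_of_int (w k) + (pv - 1) * real_of_int (d k))"
    using fun_cong[OF bw] by (auto simp: algebra_simps)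
  \<comment> \<open>b - d lies behind w on the ray and is no zero of f, as pval is maximal in its window\<close>
  with pv(4) neg_d have "b - d - w \<in> semigrp hs"
    unfolding pv_def by (intro line_diff_in_semigrp) auto
  hence "w + (b - d - w) \<in> E" using E_add w(1) by blast
  moreover have "peval f (b - d) \<noteq> 0"
    using pv(5) line_b_d unfolding pv_def Tset_def Vmon_def by blast
  ultimately have "b \<in> E" using add[of "b - d"] by simp
  moreover have "0 \<le> real n + pv" using pv(3) unfolding pv_def by simp
  moreover have "(\<lambda>k. real_of_int (b k)) = (\<lambda>k. real_of_int (u k) + (real n + pv) * real_of_int (d k))"
    using fun_cong[OF bw] fun_cong[OF wu] by (auto simp: algebra_simps)
  ultimately show ?thesis using b_Vmon' by (rule that[rotated])
qed

subsection \<open>Restricting to the region W_B'\<close>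

lemma Wset_add:
  assumes "x \<in> Wset hs \<beta>" "s \<in> semigrp hs"
  shows "x + s \<in> Wset hs \<beta>"
proof -
  have "lin (hs ! i) s \<ge> 0" if "i < length hs" for i
    using assms(2) that unfolding semigrp_def by auto
  thus ?thesis using assms semigrp_add[OF _ assms(2)] unfolding Wset_def
    by (auto simp: lin_add add_increasing2)
qed

lemma WsetB_add: "x \<in> WsetB hs B \<Longrightarrow> s \<in> semigrp hs \<Longrightarrow> x + s \<in> WsetB hs B"
  unfolding WsetB_def using Wset_add by blast

lemma Wset_transfer:
  assumes "compatible hs d \<beta>" "u \<in> Wset hs \<beta>" "b \<in> semigrp hs"
    and "\<And>h. lin h d = 0 \<Longrightarrow> lin h b = lin h u"
  shows "b \<in> Wset hs \<beta>"
  unfolding Wset_def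
proof (intro CollectI conjI allI impI assms(3))
  fix i assume i: "i < length hs"
  show "int (\<beta> ! i) \<le> lin (hs ! i) b"
  proof (cases "\<beta> ! i = 0")
    case True
    thus ?thesis using assms(3) i unfolding semigrp_def by auto
  next
    case False
    hence "lin (hs ! i) d = 0" using assms(1) i unfolding compatible_def by auto
    thus ?thesis using assms(2,4) i unfolding Wset_def by auto
  qed
qed

lemma mon_ideal_exps_Vmon'_WsetB:
  assumes add: "\<And>e. e \<in> E \<Longrightarrow> peval f e \<noteq> 0 \<Longrightarrow> e + d \<in> E"
    and nonzero: "\<And>e. e \<in> E \<Longrightarrow> peval f (e - d) \<noteq> 0"
    and E_semigrp: "E \<subseteq> semigrp hs"
    and E_add: "\<And>x s. x \<in> E \<Longrightarrow> s \<in> semigrp hs \<Longrightarrow> x + s \<in> E"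
    and "facet_data hs" "d \<noteq> 0" "- d \<in> semigrp hs"
    and compat: "\<forall>\<beta>\<in>B'. compatible hs d \<beta>"
    and generators: "Vmon' d f \<inter> WsetB hs B' \<subseteq> E"
  shows "mon_ideal_exps hs (Vmon' d f \<inter> WsetB hs B') = E \<inter> WsetB hs B'"
proof
  show "mon_ideal_exps hs (Vmon' d f \<inter> WsetB hs B') \<subseteq> E \<inter> WsetB hs B'"
  proof (rule mon_ideal_exps_least)
    show "Vmon' d f \<inter> WsetB hs B' \<subseteq> E \<inter> WsetB hs B'" using generators by blast
  next
    fix x s assume "x \<in> E \<inter> WsetB hs B'" "s \<in> semigrp hs"
    thus "x + s \<in> E \<inter> WsetB hs B'" using E_add WsetB_add by blast
  qed
next
  obtain h where h: "h \<in> set hs" "lin h d < 0" using exists_facet_lin_neg assms(5-7) .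
  show "E \<inter> WsetB hs B' \<subseteq> mon_ideal_exps hs (Vmon' d f \<inter> WsetB hs B')"
  proof
    fix u assume "u \<in> E \<inter> WsetB hs B'"
    then obtain \<beta> where u: "u \<in> E" "u \<in> Wset hs \<beta>" "\<beta> \<in> B'" unfolding WsetB_def by blast
    obtain b t where b: "b \<in> Vmon' d f" "b \<in> E" "0 \<le> t"
      and bu: "(\<lambda>k. real_of_int (b k)) = (\<lambda>k. real_of_int (u k) + t * real_of_int (d k))"
      using exists_Vmon'_on_ray[OF add nonzero E_semigrp E_add assms(7,6) h u(1)] .
    have "compatible hs d \<beta>" using compat u(3) by blast
    moreover have "b \<in> semigrp hs" using b(2) E_semigrp by blast
    ultimately have "b \<in> Wset hs \<beta>" using line_lin_eq[OF bu] by (rule Wset_transfer[OF _ u(2)])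
    hence "b \<in> Vmon' d f \<inter> WsetB hs B'" using b(1) u(3) unfolding WsetB_def by blast
    moreover have "(\<lambda>k. real_of_int (u k)) = (\<lambda>k. real_of_int (b k) + (- t) * real_of_int (d k))"
      using fun_cong[OF bu] by auto
    hence "u - b \<in> semigrp hs" by (rule line_diff_in_semigrp) (use b(3) assms(7) in auto)
    ultimately have "b + (u - b) \<in> mon_ideal_exps hs (Vmon' d f \<inter> WsetB hs B')"
      unfolding mon_ideal_exps_def by blast
    thus "u \<in> mon_ideal_exps hs (Vmon' d f \<inter> WsetB hs B')" by simp
  qed
qed

lemma delta_fixed_supported_inter_WsetB:
  assumes fixed: "delta_fixed d f {p. Poly_Mapping.keys p \<subseteq> E}"
    and E_semigrp: "E \<subseteq> semigrp hs"
    and E_add: "\<And>x s. x \<in> E \<Longrightarrow> s \<in> semigrp hs \<Longrightarrow> x + s \<in> E"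
    and "- d \<in> semigrp hs"
    and compat: "\<forall>\<beta>\<in>B'. compatible hs d \<beta>"
  shows "delta_fixed d f {p. Poly_Mapping.keys p \<subseteq> E \<inter> WsetB hs B'}"
proof (rule delta_fixed_supportedI)
  fix e assume e: "e \<in> E \<inter> WsetB hs B'" "peval f e \<noteq> 0"
  then obtain \<beta> where \<beta>: "\<beta> \<in> B'" "e \<in> Wset hs \<beta>" unfolding WsetB_def by blast
  have "e + d \<in> E" using delta_fixed_supported_add[OF fixed] e by blast
  moreover have "e + d \<in> Wset hs \<beta>"
  proof (rule Wset_transfer[OF _ \<beta>(2)])
    show "compatible hs d \<beta>" using compat \<beta>(1) by blast
    show "e + d \<in> semigrp hs" using \<open>e + d \<in> E\<close> E_semigrp by blast
  qed (simp add: lin_add)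
  ultimately show "e + d \<in> E \<inter> WsetB hs B'" using \<beta>(1) unfolding WsetB_def by blast
next
  fix e assume "e \<in> E \<inter> WsetB hs B'"
  thus "peval f (e - d) \<noteq> 0" using delta_fixed_supported_nonzero[OF fixed] by blast
next
  fix e assume "e \<in> E \<inter> WsetB hs B'"
  hence "e + - d \<in> E \<inter> WsetB hs B'" using E_add WsetB_add assms(4) by blast
  thus "e - d \<in> E \<inter> WsetB hs B'" by simp
qed

theorem mainTheorem12:
  fixes hs :: "('n::finite \<Rightarrow> int) list"
    and d :: "'n \<Rightarrow> int"
    and f :: "'n mpoly"
    and B :: "nat list set"
  assumes "facet_data hs"
    and "Hpoly hs d dvd f"
    and "d \<noteq> 0"
    and "- d \<in> semigrp hs"
    and "\<forall>\<beta>\<in>B. compatible hs d \<beta>"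
    and "delta_fixed d f (IB hs d f B)"
  shows "\<forall>B'. (\<forall>\<beta>\<in>B'. compatible hs d \<beta>) \<and> WsetB hs B' \<subseteq> WsetB hs B
           \<longrightarrow> delta_fixed d f (IB hs d f B')"
proof (intro allI impI, elim conjE)
  fix B' assume compat: "\<forall>\<beta>\<in>B'. compatible hs d \<beta>" and sub: "WsetB hs B' \<subseteq> WsetB hs B"
  have IB_eq: "IB hs d f X = {p. Poly_Mapping.keys p \<subseteq> mon_ideal_exps hs (Vmon' d f \<inter> WsetB hs X)}" for X
    unfolding IB_def mon_ideal_eq ..
  define E where "E = mon_ideal_exps hs (Vmon' d f \<inter> WsetB hs B)"
  have fixed: "delta_fixed d f {p. Poly_Mapping.keys p \<subseteq> E}" using assms(6) unfolding IB_eq E_def .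
  have E_semigrp: "E \<subseteq> semigrp hs"
    unfolding E_def by (rule mon_ideal_exps_subset_semigrp) (auto simp: WsetB_def Wset_def)
  have E_add: "x \<in> E \<Longrightarrow> s \<in> semigrp hs \<Longrightarrow> x + s \<in> E" for x s
    unfolding E_def by (rule mon_ideal_exps_add)
  have generators: "Vmon' d f \<inter> WsetB hs B' \<subseteq> E"
    using sub subset_mon_ideal_exps unfolding E_def by blast
  have exps_eq: "mon_ideal_exps hs (Vmon' d f \<inter> WsetB hs B') = E \<inter> WsetB hs B'"
    by (rule mon_ideal_exps_Vmon'_WsetB[OF delta_fixed_supported_add[OF fixed]
        delta_fixed_supported_nonzero[OF fixed] E_semigrp E_add assms(1,3,4) compat generators])
  have "delta_fixed d f {p. Poly_Mapping.keys p \<subseteq> E \<inter> WsetB hs B'}"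
    by (rule delta_fixed_supported_inter_WsetB[OF fixed E_semigrp E_add assms(4) compat])
  thus "delta_fixed d f (IB hs d f B')" by (simp only: IB_eq exps_eq)
qed

end
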